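(* Let $(\Gamma,x)\subset\Sigma$, $\lambda$, $\omega$, $D^{1/2}$, $S$, $\mathcal L$ be as in the context, and let $s\mathcal O\subset\mathbb C^\diamondsuit$ be the real subspace of functions $F$ such that $\exp(i\pi/4)F$ is s-holomorphic around every vertex of $\Gamma$. (i) $S$ restricts to an $\mathbb R$-linear isomorphism $s\mathcal O\cong\mathcal L\cap\ker(\mathit{KW}(\Gamma,x))$. (ii) The map $\widetilde T\colon\mathbb C^\diamondsuit\to\mathbb R^B$, $(\widetilde TF)(b)=\mathrm{Re}\big(i\,D_e^{1/2}\exp(-\tfrac i2\theta_e)F(z_e)\big)$ for $b=\psi_B(e)$, restricts to an isomorphism $s\mathcal O\cong\ker(\mathrm K^\omega(C_\Gamma,y))$. (iii) If $\Gamma$ is isoradially embedded in a flat surface $\Sigma$ with critical weights, the map $\widetilde{T'}\colon\mathbb C^\diamondsuit\to\mathbb C^B$, $(\widetilde{T'}F)(b)=i\,D_e^{1/2}\Pr\big(F(z_e);\,i\exp(-\tfrac i2(a_e-\theta_e))\big)$ for $b=\psi_B(e)$, restricts to an isomorphism $s\mathcal O\cong\ker(\bar\partial^{\varphi_\omega}_C)\cap\widetilde{T'}(\mathbb C^\diamondsuit)$.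
   Context: Let $\Sigma$ be a closed connected oriented surface with a Riemannian metric, $\Gamma\subset\Sigma$ a finite connected graph with smoothly embedded edges whose faces are discs, weights $x_e=\tan(\theta_e/2)$, $\theta_e\in[0,\pi/2]$. $\mathbb E$: oriented edges (origin $o$, terminus $t$, reversal $\bar e$), $z_e=z_{\bar e}$ midpoint, $\diamondsuit=\{z_e\}$, $\theta_{\bar e}=\theta_e$, $\mathbb E_v$ edges with origin $v$. Fix a vector field $\lambda$ with isolated zeros of even index in $\Sigma\setminus\Gamma$; $\alpha_\lambda(e,e')$ ($o(e')=t(e)$, $e'\ne\bar e$) is the rotation angle relative to $\lambda$ of the velocity along $e$ from $z_e$ to $t(e)$ then $e'$ to $z_{e'}$. $(\mathit{KW}(\Gamma,x)f)(e)=f(e)-x_e\sum_{e'\in\mathbb E_{t(e)},e'\ne\bar e}e^{\frac i2\alpha_\lambda(e,e')}f(e')$. $a_e$: oriented angle at $z_e$ from $\lambda$ to $e$, $D_e=e^{ia_e}$; $R(e)$: next element of $\mathbb E_{o(e)}$ counterclockwise; $\beta_e=\pi+\alpha_\lambda(\bar e,R(e))$, $q_e=e^{i\beta_e/2}$. $\Pr(\cdot;u)$: orthogonal projection of $\mathbb C$ onto $u\mathbb R$. $G\in\mathbb C^\diamondsuit$ is s-holomorphic around $v$ if for all $e\in\mathbb E_v$, $e'=R(e)$: $\Pr\big(G(z_e);[ie^{i(a_e+\theta_e)}]^{-1/2}\big)=\Pr\big(G(z_{e'});[ie^{i(a_{e'}-\theta_{e'})}]^{-1/2}\big)\exp(\tfrac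 i2(\beta_e-\theta_e-\theta_{e'}))$. $C_\Gamma$: each edge replaced by a rectangle; for each orientation $e$, vertex near $o(e)$ right of $e$ is black $\psi_B(e)$, near $o(e)$ left of $e$ is white $\psi_W(e)$; edges $\{\psi_W(e),\psi_B(e)\}$ weight $\cos\theta_e$, $\{\psi_W(e),\psi_B(\bar e)\}$ weight $\sin\theta_e$, corner edges $\{\psi_W(e),\psi_B(R(e))\}$ weight $1$; $B,W$ black/white sets. A Kasteleyn orientation $\omega\colon E(C_\Gamma)\to\{\pm1\}$ has $\prod_{\partial f}\omega=(-1)^{|\partial f|/2+1}$ on each face; $(\mathrm K^\omega g)(w)=\sum_{b\sim w}\omega(w,b)y_{wb}g(b)$, $\mathbb R^B\to\mathbb R^W$. Fix $\omega$ and square roots $D_e^{1/2}$ such that $\mathit{KW}(\Gamma,x)\circ(I-qR)\circ D^{-1/2}\circ\psi_B=(I-ixJ)\circ D^{-1/2}\circ\psi_W\circ\mathrm K^\omega$ (such a pair exists), with $(Jf)(e)=f(\bar e)$, $(Rf)(e)=f(R(e))$, $q,x,D^{-1/2}=(D^{1/2})^{-1}$ diagonal, $(\psi_Bg)(e)=g(\psi_B(e))$, $(\psi_Wh)(e)=h(\psi_W(e))$. $\mathcal L=\{f\in\mathbb C^{\mathbb E}: f(e)\in e^{-\frac i2a_e}\mathbb R\}$, $(SF)(e)=\sin(\theta_e/2)\Pr(F(z_e);e^{-\frac i2a_e})$. Isoradial case: $\Sigma$ flat with conical singularities, obtained by gluing rhombi of common side $\delta$ whose distinguished diagonals form $\Gamma$,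 all cone angles odd multiples of $2\pi$, $\theta_e$ the half-rhombus angle of $e$, $x_e=\tan(\theta_e/2)$. For $w=\psi_W(e)$, $b_1=\psi_B(e)$, $b_2=\psi_B(\bar e)$, $b_3=\psi_B(R(e))$: $(\bar\partial^\varphi_Cg)(w)=\sin(2\theta_e)^{-1}\big(\varphi(w,b_1)\cos\theta_eg(b_1)+i\varphi(w,b_2)\sin\theta_eg(b_2)-e^{i\theta_e}\varphi(w,b_3)g(b_3)\big)$, and $\varphi_\omega(w,b_1)=\omega(w,b_1)$, $\varphi_\omega(w,b_2)=-i\omega(w,b_2)$, $\varphi_\omega(w,b_3)=-\exp(-\tfrac i2(\theta_e+\theta_{R(e)}))\omega(w,b_3)$. *)

theory Defs
  imports Complex_Main
begin

text \<open>Oriented edges (darts) form a finite type 'd.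
  J = reversal e \<mapsto> bar e, R = next dart counterclockwise around the origin vertex.
  Vertices of Gamma = R-orbits, edges = J-orbits, faces = orbits of inv R o J.
  Geometry (relative to the vector field lambda):
   phi e = angle (relative to lambda) of the tangent direction of e at o(e);
   r e   = rotation of the velocity relative to lambda along e from o(e) to z_e.\<close>

definition orb :: "('d \<Rightarrow> 'd) \<Rightarrow> 'd \<Rightarrow> 'd set" where
  "orb f e = {(f ^^ n) e | n. True}"

definition face_next :: "('d \<Rightarrow> 'd) \<Rightarrow> ('d \<Rightarrow> 'd) \<Rightarrow> 'd \<Rightarrow> 'd" where
  "face_next J R e = inv R (J e)"

definition combinatorial_map :: "('d \<Rightarrow> 'd) \<Rightarrow> ('d \<Rightarrow> 'd) \<Rightarrow> bool" where
  "combinatorial_map J R \<longleftrightarrow>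
     (\<forall>e. J (J e) = e \<and> J e \<noteq> e) \<and> bij R \<and>
     (\<forall>d d'. (d, d') \<in> ({(e, J e) | e. True} \<union> {(e, R e) | e. True})\<^sup>*)"

definition ccw_angle :: "('d \<Rightarrow> real) \<Rightarrow> ('d \<Rightarrow> 'd) \<Rightarrow> 'd \<Rightarrow> real" where
  "ccw_angle \<phi> R e =
     (let m = 2 * pi * frac ((\<phi> (R e) - \<phi> e) / (2 * pi)) in if m = 0 then 2 * pi else m)"

text \<open>principal value in (-pi, pi] (turning angle at a corner)\<close>
definition princ :: "real \<Rightarrow> real" where
  "princ x = x - 2 * pi * of_int \<lceil>(x - pi) / (2 * pi)\<rceil>"

text \<open>a_e: oriented angle at z_e from lambda to e\<close>
definition aang :: "('d \<Rightarrow> real) \<Rightarrow> ('d \<Rightarrow> real) \<Rightarrow> 'd \<Rightarrow> real" where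
  "aang \<phi> r e = \<phi> e + r e"

text \<open>alpha_lambda(e,e'), for o(e') = t(e), e' \<noteq> bar e\<close>
definition alpha :: "('d \<Rightarrow> 'd) \<Rightarrow> ('d \<Rightarrow> real) \<Rightarrow> ('d \<Rightarrow> real) \<Rightarrow> 'd \<Rightarrow> 'd \<Rightarrow> real" where
  "alpha J \<phi> r e e' = - r (J e) + princ (\<phi> e' - \<phi> (J e) - pi) + r e'"

definition beta :: "('d \<Rightarrow> 'd) \<Rightarrow> ('d \<Rightarrow> 'd) \<Rightarrow> ('d \<Rightarrow> real) \<Rightarrow> ('d \<Rightarrow> real) \<Rightarrow> 'd \<Rightarrow> real" where
  "beta J R \<phi> r e = pi + alpha J \<phi> r (J e) (R e)"

definition qq :: "('d \<Rightarrow> 'd) \<Rightarrow> ('d \<Rightarrow> 'd) \<Rightarrow> ('d \<Rightarrow> real) \<Rightarrow> ('d \<Rightarrow> real) \<Rightarrow> 'd \<Rightarrow> complex" where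
  "qq J R \<phi> r e = cis (beta J R \<phi> r e / 2)"

definition xw :: "('d \<Rightarrow> real) \<Rightarrow> 'd \<Rightarrow> real" where
  "xw \<theta> e = tan (\<theta> e / 2)"

text \<open>The data come from a smooth graph embedding on a closed oriented surface with a vector
  field lambda whose zeros (in the complement of Gamma) have even index.\<close>
definition geometric_data ::
  "('d \<Rightarrow> 'd) \<Rightarrow> ('d \<Rightarrow> 'd) \<Rightarrow> ('d \<Rightarrow> real) \<Rightarrow> ('d \<Rightarrow> real) \<Rightarrow> ('d \<Rightarrow> real) \<Rightarrow> bool" where
  "geometric_data J R \<phi> r \<theta> \<longleftrightarrow>
     (\<forall>e. \<theta> (J e) = \<theta> e \<and> 0 \<le> \<theta> e \<and> \<theta> e \<le> pi / 2) \<and>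
     (\<forall>e. (\<Sum>d\<in>orb R e. ccw_angle \<phi> R d) = 2 * pi) \<and>
     (\<forall>e. \<exists>k::int. aang \<phi> r (J e) = aang \<phi> r e + pi + 2 * pi * k) \<and>
     (\<forall>e. \<exists>k::int.
        (\<Sum>d\<in>orb (face_next J R) e.
            - r (J d) + (pi - ccw_angle \<phi> R (face_next J R d)) + r (face_next J R d))
        = 2 * pi + 4 * pi * k)"

definition Pr :: "complex \<Rightarrow> complex \<Rightarrow> complex" where
  "Pr z u = of_real (Re (z * cnj u) / (cmod u)\<^sup>2) * u"

definition KW :: "('d::finite \<Rightarrow> 'd) \<Rightarrow> ('d \<Rightarrow> 'd) \<Rightarrow> ('d \<Rightarrow> real) \<Rightarrow> ('d \<Rightarrow> real)
                   \<Rightarrow> ('d \<Rightarrow> real) \<Rightarrow> ('d \<Rightarrow> complex) \<Rightarrow> 'd \<Rightarrow> complex" where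
  "KW J R \<phi> r \<theta> f e = f e - of_real (xw \<theta> e) *
     (\<Sum>e'\<in>{d \<in> orb R (J e). d \<noteq> J e}. cis (alpha J \<phi> r e e' / 2) * f e')"

text \<open>Kasteleyn operator of C_Gamma; black and white vertices psi_B(e), psi_W(e) are
  indexed by darts e.  om1 e = omega(psi_W e, psi_B e), om2 e = omega(psi_W e, psi_B (J e)),
  om3 e = omega(psi_W e, psi_B (R e)).\<close>
definition Kast :: "('d \<Rightarrow> 'd) \<Rightarrow> ('d \<Rightarrow> 'd) \<Rightarrow> ('d \<Rightarrow> real) \<Rightarrow> ('d \<Rightarrow> real) \<Rightarrow> ('d \<Rightarrow> real)
                     \<Rightarrow> ('d \<Rightarrow> real) \<Rightarrow> ('d \<Rightarrow> real) \<Rightarrow> 'd \<Rightarrow> real" where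
  "Kast J R \<theta> om1 om2 om3 g e =
     om1 e * cos (\<theta> e) * g e + om2 e * sin (\<theta> e) * g (J e) + om3 e * g (R e)"

definition kasteleyn :: "('d::finite \<Rightarrow> 'd) \<Rightarrow> ('d \<Rightarrow> 'd) \<Rightarrow> ('d \<Rightarrow> real) \<Rightarrow> ('d \<Rightarrow> real)
                          \<Rightarrow> ('d \<Rightarrow> real) \<Rightarrow> bool" where
  "kasteleyn J R om1 om2 om3 \<longleftrightarrow>
     (\<forall>e. om1 e \<in> {-1, 1} \<and> om2 e \<in> {-1, 1} \<and> om3 e \<in> {-1, 1}) \<and>
     (\<forall>e. om1 e * om2 e * om1 (J e) * om2 (J e) = -1) \<and>
     (\<forall>e. (\<Prod>d\<in>orb R e. om1 d * om3 d) = (-1) ^ (card (orb R e) + 1)) \<and>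
     (\<forall>e. (\<Prod>d\<in>orb (J \<circ> R) e. om3 d * om2 (J (R d))) = (-1) ^ (card (orb (J \<circ> R) e) + 1))"

definition CD :: "('d \<Rightarrow> 'd) \<Rightarrow> ('d \<Rightarrow> complex) set" where
  "CD J = {F. \<forall>e. F (J e) = F e}"

definition shol_at :: "('d \<Rightarrow> 'd) \<Rightarrow> ('d \<Rightarrow> 'd) \<Rightarrow> ('d \<Rightarrow> real) \<Rightarrow> ('d \<Rightarrow> real) \<Rightarrow> ('d \<Rightarrow> real)
                       \<Rightarrow> ('d \<Rightarrow> complex) \<Rightarrow> 'd \<Rightarrow> bool" where
  "shol_at J R \<phi> r \<theta> G e \<longleftrightarrow>
     Pr (G e) (cis (- (pi / 2 + aang \<phi> r e + \<theta> e) / 2)) =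
     Pr (G (R e)) (cis (- (pi / 2 + aang \<phi> r (R e) - \<theta> (R e)) / 2)) *
       cis ((beta J R \<phi> r e - \<theta> e - \<theta> (R e)) / 2)"

definition sO :: "('d \<Rightarrow> 'd) \<Rightarrow> ('d \<Rightarrow> 'd) \<Rightarrow> ('d \<Rightarrow> real) \<Rightarrow> ('d \<Rightarrow> real) \<Rightarrow> ('d \<Rightarrow> real)
                  \<Rightarrow> ('d \<Rightarrow> complex) set" where
  "sO J R \<phi> r \<theta> = {F \<in> CD J. \<forall>e. shol_at J R \<phi> r \<theta> (\<lambda>d. cis (pi / 4) * F d) e}"

definition SS :: "('d \<Rightarrow> real) \<Rightarrow> ('d \<Rightarrow> real) \<Rightarrow> ('d \<Rightarrow> real) \<Rightarrow> ('d \<Rightarrow> complex) \<Rightarrow> 'd \<Rightarrow> complex" where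
  "SS \<phi> r \<theta> F e = of_real (sin (\<theta> e / 2)) * Pr (F e) (cis (- aang \<phi> r e / 2))"

definition LL :: "('d \<Rightarrow> real) \<Rightarrow> ('d \<Rightarrow> real) \<Rightarrow> ('d \<Rightarrow> complex) set" where
  "LL \<phi> r = {f. \<forall>e. \<exists>t::real. f e = cis (- aang \<phi> r e / 2) * of_real t}"

definition Tt :: "('d \<Rightarrow> complex) \<Rightarrow> ('d \<Rightarrow> real) \<Rightarrow> ('d \<Rightarrow> complex) \<Rightarrow> 'd \<Rightarrow> real" where
  "Tt Dh \<theta> F e = Re (\<i> * Dh e * cis (- \<theta> e / 2) * F e)"

definition Tp :: "('d \<Rightarrow> complex) \<Rightarrow> ('d \<Rightarrow> real) \<Rightarrow> ('d \<Rightarrow> real) \<Rightarrow> ('d \<Rightarrow> real)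
                  \<Rightarrow> ('d \<Rightarrow> complex) \<Rightarrow> 'd \<Rightarrow> complex" where
  "Tp Dh \<phi> r \<theta> F e = \<i> * Dh e * Pr (F e) (\<i> * cis (- (aang \<phi> r e - \<theta> e) / 2))"

definition dbar :: "('d \<Rightarrow> 'd) \<Rightarrow> ('d \<Rightarrow> 'd) \<Rightarrow> ('d \<Rightarrow> real) \<Rightarrow> ('d \<Rightarrow> real) \<Rightarrow> ('d \<Rightarrow> real)
                    \<Rightarrow> ('d \<Rightarrow> real) \<Rightarrow> ('d \<Rightarrow> complex) \<Rightarrow> 'd \<Rightarrow> complex" where
  "dbar J R \<theta> om1 om2 om3 g e =
     inverse (of_real (sin (2 * \<theta> e))) *
       (of_real (om1 e) * of_real (cos (\<theta> e)) * g e
        + \<i> * (- \<i> * of_real (om2 e)) * of_real (sin (\<theta> e)) * g (J e)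
        - cis (\<theta> e) * (- cis (- (\<theta> e + \<theta> (R e)) / 2) * of_real (om3 e)) * g (R e))"

text \<open>Isoradial case: rhombi with half-angle theta_e at the primal vertices (angle between
  e and R e is theta_e + theta_(R e)); cone angles at primal and dual vertices are odd
  multiples of 2 pi; angles relative to lambda at a cone vertex v are flat angles rescaled
  by 2 pi / (cone angle) (conformal smooth structure at the cone point).\<close>
definition isoradial :: "('d \<Rightarrow> 'd) \<Rightarrow> ('d \<Rightarrow> 'd) \<Rightarrow> ('d \<Rightarrow> real) \<Rightarrow> ('d \<Rightarrow> real) \<Rightarrow> bool" where
  "isoradial J R \<phi> \<theta> \<longleftrightarrow>
     (\<forall>e. 0 < \<theta> e \<and> \<theta> e < pi / 2) \<and>
     (\<forall>e. \<exists>k::int. (\<Sum>d\<in>orb R e. 2 * \<theta> d) = 2 * pi * (2 * k + 1)) \<and>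
     (\<forall>e. \<exists>k::int. (\<Sum>d\<in>orb (face_next J R) e. pi - 2 * \<theta> d) = 2 * pi * (2 * k + 1)) \<and>
     (\<forall>e. ccw_angle \<phi> R e = (\<theta> e + \<theta> (R e)) * 2 * pi / (\<Sum>d\<in>orb R e. 2 * \<theta> d))"

end

theory Submission
  imports Defs "HOL-Analysis.Analysis" "HOL-Combinatorics.Orbits"
begin

text \<open>Let \<open>Tt F\<close> be the real values that \<open>F \<in> \<complex>\<^sup>\<diamondsuit>\<close> induces on the black
  vertices. On functions invariant under reversal \<open>Tt\<close> is a bijection onto \<open>\<real>\<^sup>B\<close>, and
  s-holomorphicity at the pair of darts \<open>(e, R e)\<close> is exactly the Kasteleyn equation of
  \<open>C_\<Gamma>\<close> at the white vertex \<open>\<psi>_W(e)\<close>; this is (ii). In the isoradial case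
  \<open>T' F = exp(i \<theta>/2) Tt F\<close>, and the operator \<open>dbar\<close> applied to such a function is a nonzero
  multiple of the Kasteleyn operator, which gives (iii).

  For (i), on \<open>sO\<close> one has \<open>S F = (I - qR) D^(-1/2) (Tt F / 2)\<close>. The map \<open>(I - qR) D^(-1/2)\<close>
  is injective, because \<open>q\<close> transports \<open>D^(1/2)\<close> once around each vertex to \<open>-D^(1/2)\<close>;
  by dimension count its image is \<open>\<L>\<close>. Finally the Kac--Ward identity
  \<open>KW (I - qR) D^(-1/2) = (I - ixJ) D^(-1/2) K\<close>, whose right-hand factor is injective,
  maps \<open>ker K\<close> onto \<open>\<L> \<inter> ker KW\<close>.\<close>

section \<open>Angles around a vertex\<close>

lemma princ_add_multiple_2pi:
  assumes "-pi < y" "y \<le> pi"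
  shows "princ (y + 2 * pi * of_int m) = y"
proof -
  have "\<lceil>(y + 2 * pi * of_int m - pi) / (2 * pi)\<rceil> = m"
  proof (rule ceiling_unique)
    have shift: "(y + 2 * pi * of_int m - pi) / (2 * pi) = of_int m + (y - pi) / (2 * pi)"
      by (simp add: field_simps)
    have "-1 < (y - pi) / (2 * pi)" "(y - pi) / (2 * pi) \<le> 0"
      using assms by (simp_all add: field_simps)
    then show "of_int m - 1 < (y + 2 * pi * of_int m - pi) / (2 * pi)"
      "(y + 2 * pi * of_int m - pi) / (2 * pi) \<le> of_int m"
      unfolding shift by linarith+
  qed
  then show ?thesis unfolding princ_def by simp
qed

lemma ccw_angle_bounds: "0 < ccw_angle \<phi> R e" "ccw_angle \<phi> R e \<le> 2 * pi"
  using frac_lt_1[of "(\<phi> (R e) - \<phi> e) / (2 * pi)"] frac_ge_0[of "(\<phi> (R e) - \<phi> e) / (2 * pi)"]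
  by (auto simp: ccw_angle_def Let_def)

lemma ccw_angle_cong: "\<exists>m::int. ccw_angle \<phi> R e = \<phi> (R e) - \<phi> e + 2 * pi * of_int m"
proof -
  define t where "t = (\<phi> (R e) - \<phi> e) / (2 * pi)"
  define m where "m = 2 * pi * frac t"
  have angle: "ccw_angle \<phi> R e = (if m = 0 then 2 * pi else m)"
    unfolding ccw_angle_def m_def t_def Let_def by simp
  have "m = \<phi> (R e) - \<phi> e + 2 * pi * of_int (- \<lfloor>t\<rfloor>)"
    unfolding m_def frac_def t_def by (simp add: field_simps)
  then show ?thesis
    using angle by (cases "m = 0") (auto intro: exI[of _ "1 - \<lfloor>t\<rfloor>"] exI[of _ "- \<lfloor>t\<rfloor>"] simp: algebra_simps)
qed

lemma princ_ccw_angle: "princ (\<phi> (R e) - \<phi> e - pi) = ccw_angle \<phi> R e - pi"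
proof -
  obtain m :: int where m: "ccw_angle \<phi> R e = \<phi> (R e) - \<phi> e + 2 * pi * of_int m"
    using ccw_angle_cong[of \<phi> R e] by blast
  then have "\<phi> (R e) - \<phi> e - pi = (ccw_angle \<phi> R e - pi) + 2 * pi * of_int (- m)"
    by simp
  moreover have "-pi < ccw_angle \<phi> R e - pi" "ccw_angle \<phi> R e - pi \<le> pi"
    using ccw_angle_bounds[of \<phi> R e] by auto
  ultimately show ?thesis by (simp only: princ_add_multiple_2pi)
qed

lemma qq_eq_cis_ccw_angle:
  assumes "J (J e) = e"
  shows "qq J R \<phi> r e = cis ((ccw_angle \<phi> R e + r (R e) - r e) / 2)"
  using assms princ_ccw_angle[of \<phi> R e] by (simp add: qq_def beta_def alpha_def add_diff_eq)

lemma orbit_enumeration: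
  fixes R :: "'d::finite \<Rightarrow> 'd" and b :: 'd
  assumes "bij R"
  defines "n \<equiv> funpow_dist1 R b b"
  shows "0 < n" "(R ^^ n) b = b" "inj_on (\<lambda>k. (R ^^ k) b) {..<n}"
    "orb R b = (\<lambda>k. (R ^^ k) b) ` {..<n}"
proof -
  have self: "b \<in> orbit R b"
    using assms by (intro permutation_self_in_orbit) (simp add: permutation)
  show "0 < n" "(R ^^ n) b = b" unfolding n_def using funpow_dist1_prop[OF self] by simp_all
  show "inj_on (\<lambda>k. (R ^^ k) b) {..<n}"
    unfolding n_def lessThan_atLeast0 by (rule inj_on_funpow_dist1[OF self])
  show "orb R b = (\<lambda>k. (R ^^ k) b) ` {..<n}"
    unfolding n_def lessThan_atLeast0 orbit_conv_funpow_dist1[OF self, symmetric]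
      orbit_altdef_self_in[OF self] orb_def ..
qed

lemma sum_orb_enumeration:
  fixes R :: "'d::finite \<Rightarrow> 'd"
  assumes "bij R"
  shows "(\<Sum>d\<in>orb R b. f d) = (\<Sum>k<funpow_dist1 R b b. f ((R ^^ k) b))"
  using orbit_enumeration[OF assms, of b] by (simp add: sum.reindex)

lemma partial_sum_ccw_angle_cong:
  "\<exists>m::int. (\<Sum>i<k. ccw_angle \<phi> R ((R ^^ i) b)) = \<phi> ((R ^^ k) b) - \<phi> b + 2 * pi * of_int m"
proof (induction k)
  case 0
  show ?case by (intro exI[of _ 0]) simp
next
  case (Suc k)
  then obtain m :: int
    where m: "(\<Sum>i<k. ccw_angle \<phi> R ((R ^^ i) b)) = \<phi> ((R ^^ k) b) - \<phi> b + 2 * pi * of_int m"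
    by blast
  obtain m' :: int where m': "ccw_angle \<phi> R ((R ^^ k) b)
      = \<phi> (R ((R ^^ k) b)) - \<phi> ((R ^^ k) b) + 2 * pi * of_int m'"
    using ccw_angle_cong[of \<phi> R "(R ^^ k) b"] by blast
  show ?case
    using m m' by (intro exI[of _ "m + m'"]) (simp add: algebra_simps)
qed

lemma princ_partial_sum_ccw_angle:
  assumes total: "(\<Sum>i<n. ccw_angle \<phi> R ((R ^^ i) b)) = 2 * pi" and k: "1 \<le> k" "k < n"
  shows "princ (\<phi> ((R ^^ k) b) - \<phi> b - pi) = (\<Sum>i<k. ccw_angle \<phi> R ((R ^^ i) b)) - pi"
proof -
  define S where "S j = (\<Sum>i<j. ccw_angle \<phi> R ((R ^^ i) b))" for j
  have "0 < S k"
    unfolding S_def using k by (intro sum_pos) (auto simp: lessThan_empty_iff intro: ccw_angle_bounds)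
  moreover have "S k < 2 * pi"
  proof -
    have "S n = S k + (\<Sum>i\<in>{k..<n}. ccw_angle \<phi> R ((R ^^ i) b))"
    proof -
      have split: "{..<n} = {..<k} \<union> {k..<n}" using k by auto
      show ?thesis unfolding S_def split by (rule sum.union_disjoint) auto
    qed
    moreover have "0 < (\<Sum>i\<in>{k..<n}. ccw_angle \<phi> R ((R ^^ i) b))"
      using k by (intro sum_pos) (auto intro: ccw_angle_bounds)
    ultimately show ?thesis using total unfolding S_def by simp
  qed
  moreover obtain m :: int where "S k = \<phi> ((R ^^ k) b) - \<phi> b + 2 * pi * of_int m"
    unfolding S_def using partial_sum_ccw_angle_cong[of \<phi> R b k] by blast
  then have "\<phi> ((R ^^ k) b) - \<phi> b - pi = (S k - pi) + 2 * pi * of_int (- m)"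
    by simp
  ultimately show ?thesis
    unfolding S_def[symmetric] by (simp only: princ_add_multiple_2pi)
qed

lemma orb_diff_self:
  fixes R :: "'d::finite \<Rightarrow> 'd"
  assumes "bij R"
  shows "{d \<in> orb R b. d \<noteq> b} = (\<lambda>k. (R ^^ k) b) ` {1..<funpow_dist1 R b b}"
proof -
  define n where "n = funpow_dist1 R b b"
  note enum = orbit_enumeration[OF assms, of b, folded n_def]
  have "(R ^^ k) b \<noteq> b" if "1 \<le> k" "k < n" for k
    using inj_onD[OF enum(3), of k 0] that by auto
  moreover have "(R ^^ k) b \<in> (\<lambda>k. (R ^^ k) b) ` {1..<n}" if "k < n" "(R ^^ k) b \<noteq> b" for k
    using that by (intro image_eqI[where x = k]) (auto simp: Suc_le_eq intro: gr0I)
  ultimately show ?thesis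
    unfolding enum(4) n_def[symmetric] using enum(1) by auto
qed

section \<open>The Kac--Ward operator on twisted differences\<close>

lemma alpha_around_vertex:
  fixes R :: "'d::finite \<Rightarrow> 'd"
  assumes "bij R" and total: "(\<Sum>d\<in>orb R (J e). ccw_angle \<phi> R d) = 2 * pi"
    and k: "1 \<le> k" "k < funpow_dist1 R (J e) (J e)"
  shows "alpha J \<phi> r e ((R ^^ k) (J e))
    = (\<Sum>i<k. ccw_angle \<phi> R ((R ^^ i) (J e))) - pi + r ((R ^^ k) (J e)) - r (J e)"
proof -
  have "(\<Sum>i<funpow_dist1 R (J e) (J e). ccw_angle \<phi> R ((R ^^ i) (J e))) = 2 * pi"
    using total by (simp only: sum_orb_enumeration[OF \<open>bij R\<close>])
  from princ_partial_sum_ccw_angle[OF this k] show ?thesis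
    by (simp add: alpha_def)
qed

lemma sum_twisted_telescope:
  fixes c q G :: "nat \<Rightarrow> complex"
  assumes "\<And>k. c k * q k = c (Suc k)" and "1 \<le> n"
  shows "(\<Sum>k\<in>{1..<n}. c k * (G k - q k * G (Suc k))) = c 1 * G 1 - c n * G n"
  using \<open>1 \<le> n\<close> by (induction n rule: dec_induct) (simp_all add: algebra_simps flip: assms(1))

text \<open>Around the vertex \<open>t(e)\<close> the summands of \<open>KW\<close> telescope; the two boundary terms
  are the first and last neighbours of \<open>J e\<close>, whose phases differ by the full turn \<open>2 \<pi>\<close>.\<close>

lemma KW_twisted_difference:
  fixes J R :: "'d::finite \<Rightarrow> 'd" and G :: "'d \<Rightarrow> complex"
  assumes J: "\<forall>d. J (J d) = d" and "bij R"
    and total: "(\<Sum>d\<in>orb R (J e). ccw_angle \<phi> R d) = 2 * pi"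
  shows "KW J R \<phi> r \<theta> (\<lambda>d. G d - qq J R \<phi> r d * G (R d)) e
       = G e - qq J R \<phi> r e * G (R e)
         + \<i> * of_real (xw \<theta> e) * (G (J e) + qq J R \<phi> r (J e) * G (R (J e)))"
proof -
  define b where "b = J e"
  define n where "n = funpow_dist1 R b b"
  define y where "y k = (R ^^ k) b" for k
  define S where "S k = (\<Sum>i<k. ccw_angle \<phi> R (y i))" for k
  define c where "c k = cis ((S k - pi + r (y k) - r b) / 2)" for k
  note enum = orbit_enumeration[OF \<open>bij R\<close>, of b, folded n_def y_def]
  have qq: "qq J R \<phi> r d = cis ((ccw_angle \<phi> R d + r (R d) - r d) / 2)" for d
    using J by (simp add: qq_eq_cis_ccw_angle)
  have y_Suc: "y (Suc k) = R (y k)" for k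
    unfolding y_def by simp
  have rotate: "c k * qq J R \<phi> r (y k) = c (Suc k)" for k
    unfolding c_def qq S_def y_Suc cis_mult by (rule arg_cong[where f = cis]) (simp add: field_simps)
  have "(\<Sum>e'\<in>{d \<in> orb R b. d \<noteq> b}. cis (alpha J \<phi> r e e' / 2) * (G e' - qq J R \<phi> r e' * G (R e')))
      = (\<Sum>k\<in>{1..<n}. c k * (G (y k) - qq J R \<phi> r (y k) * G (y (Suc k))))"
  proof -
    have "inj_on y {1..<n}"
      using enum(3) unfolding y_def by (rule inj_on_subset) auto
    moreover have "alpha J \<phi> r e (y k) = S k - pi + r (y k) - r b" if "k \<in> {1..<n}" for k
      using alpha_around_vertex[where J = J and e = e and k = k and r = r, OF \<open>bij R\<close> total] that
      unfolding b_def[symmetric] n_def[symmetric] S_def y_def by simp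
    ultimately show ?thesis
      unfolding orb_diff_self[OF \<open>bij R\<close>] n_def[symmetric] y_def[symmetric]
      by (simp add: sum.reindex c_def y_Suc)
  qed
  also have "\<dots> = c 1 * G (y 1) - c n * G (y n)"
    using Suc_leI[OF enum(1)] by (intro sum_twisted_telescope rotate) simp
  also have "c n * G (y n) = \<i> * G b"
  proof -
    have "S n = 2 * pi"
      using total unfolding S_def y_def n_def b_def by (simp only: sum_orb_enumeration[OF \<open>bij R\<close>])
    then show ?thesis
      using enum(2) unfolding c_def y_def by simp
  qed
  also have "c 1 * G (y 1) = - \<i> * qq J R \<phi> r b * G (R b)"
  proof -
    have "cis ((ccw_angle \<phi> R b - pi + r (R b) - r b) / 2)
        = cis (- (pi / 2)) * cis ((ccw_angle \<phi> R b + r (R b) - r b) / 2)"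
      unfolding cis_mult by (rule arg_cong[where f = cis]) (simp add: field_simps)
    then show ?thesis
      unfolding c_def S_def y_def qq by simp
  qed
  finally have sum: "(\<Sum>e'\<in>{d \<in> orb R b. d \<noteq> b}. cis (alpha J \<phi> r e e' / 2)
          * (G e' - qq J R \<phi> r e' * G (R e')))
      = - \<i> * qq J R \<phi> r b * G (R b) - \<i> * G b" .
  show ?thesis
    unfolding KW_def b_def[symmetric] sum by (simp add: algebra_simps)
qed

lemma cis_add_multiple_2pi: "cis (x + 2 * pi * of_int m) = cis x"
  by (simp flip: cis_mult)

lemma square_eq_imp_sign_factor:
  fixes z w :: complex
  assumes "z\<^sup>2 = w\<^sup>2"
  shows "z = of_real (if z = w then 1 else -1) * w"
  using assms by (auto simp: power2_eq_iff)

lemma Pr_unit: "cmod u = 1 \<Longrightarrow> Pr z u = of_real (Re (z * cnj u)) * u"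
  unfolding Pr_def by simp

lemma Pr_sign: "s = 1 \<or> s = -1 \<Longrightarrow> Pr z (of_real s * u) = Pr z u"
  by (auto simp: Pr_def norm_mult field_simps)

lemma cis_half_square: "(cis (x / 2))\<^sup>2 = cis x"
  by (simp add: power2_eq_square cis_mult)

section \<open>Square roots of \<open>D\<close> and the two lifts\<close>

lemma twisted_shift_surj:
  fixes c :: "'d::finite \<Rightarrow> real" and R :: "'d \<Rightarrow> 'd"
  assumes inj: "\<And>h. \<forall>e. h e = c e * h (R e) \<Longrightarrow> h = (\<lambda>_. 0)"
  shows "\<exists>h. \<forall>e. h e - c e * h (R e) = t e"
proof -
  define L :: "real^'d \<Rightarrow> real^'d" where "L v = (\<chi> e. v$e - c e * v$(R e))" for v
  have "linear L"
    by (rule linearI) (simp_all add: L_def vec_eq_iff algebra_simps)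
  moreover have "inj L"
  proof (rule injI)
    fix v w assume "L v = L w"
    then have "\<forall>e. (v - w)$e = c e * (v - w)$(R e)"
      unfolding L_def vec_eq_iff by (simp add: algebra_simps)
    then have "(\<lambda>e. (v - w)$e) = (\<lambda>_. 0)" by (rule inj)
    then show "v = w" by (simp add: vec_eq_iff fun_eq_iff)
  qed
  ultimately obtain v where "L v = (\<chi> e. t e)"
    by (metis linear_injective_imp_surjective surjD)
  then show ?thesis unfolding L_def vec_eq_iff by auto
qed

locale kac_ward_kasteleyn =
  fixes J R :: "'d::finite \<Rightarrow> 'd" and \<phi> r \<theta> om1 om2 om3 :: "'d \<Rightarrow> real"
    and Dh :: "'d \<Rightarrow> complex"
  assumes map: "combinatorial_map J R"
    and geo: "geometric_data J R \<phi> r \<theta>"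
    and Dh_square: "\<forall>e. (Dh e)\<^sup>2 = cis (aang \<phi> r e)"
    and KW_identity: "\<forall>g e.
        KW J R \<phi> r \<theta>
          (\<lambda>d. of_real (g d) / Dh d - qq J R \<phi> r d * (of_real (g (R d)) / Dh (R d))) e
        = of_real (Kast J R \<theta> om1 om2 om3 g e) / Dh e
          - \<i> * of_real (xw \<theta> e) * (of_real (Kast J R \<theta> om1 om2 om3 g (J e)) / Dh (J e))"
begin

lemma J_J [simp]: "J (J e) = e"
  using map by (simp add: combinatorial_map_def)

lemma bij_R: "bij R"
  using map by (simp add: combinatorial_map_def)

lemma theta_J [simp]: "\<theta> (J e) = \<theta> e"
  using geo by (simp add: geometric_data_def)

lemma theta_bounds: "0 \<le> \<theta> e" "\<theta> e \<le> pi / 2"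
  using geo by (simp_all add: geometric_data_def)

lemma ccw_angle_sum: "(\<Sum>d\<in>orb R e. ccw_angle \<phi> R d) = 2 * pi"
  using geo by (simp add: geometric_data_def)

lemma Dh_norm [simp]: "cmod (Dh e) = 1"
proof -
  have "(cmod (Dh e))\<^sup>2 = 1"
    using Dh_square by (metis norm_cis norm_power)
  then show ?thesis
    using norm_ge_zero[of "Dh e"] by (auto simp: power2_eq_1_iff)
qed

lemma Dh_nonzero [simp]: "Dh e \<noteq> 0"
  using Dh_norm[of e] by (auto simp del: Dh_norm)

lemma Dh_mult_cnj [simp]: "Dh e * cnj (Dh e) = 1"
  using complex_norm_square[of "Dh e"] by simp

lemma cnj_Dh: "cnj (Dh e) = 1 / Dh e"
  using Dh_mult_cnj[of e] by (simp add: field_simps del: Dh_mult_cnj)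

lemma of_real_div_Dh_eq_iff [simp]: "of_real a / Dh e = of_real b / Dh e \<longleftrightarrow> a = b"
  by (simp add: divide_cancel_right)

lemma cis_half_aang: "\<exists>s. (s = 1 \<or> s = -1) \<and> cis (- aang \<phi> r e / 2) = of_real s * cnj (Dh e)"
proof -
  have "(cis (- aang \<phi> r e / 2))\<^sup>2 = cis (- aang \<phi> r e)"
    by (rule cis_half_square)
  also have "\<dots> = (cnj (Dh e))\<^sup>2"
    using Dh_square by (simp add: cis_cnj flip: complex_cnj_power)
  finally have "cis (- aang \<phi> r e / 2)
      = of_real (if cis (- aang \<phi> r e / 2) = cnj (Dh e) then 1 else -1) * cnj (Dh e)"
    by (rule square_eq_imp_sign_factor)
  then show ?thesis
    by (intro exI[of _ "if cis (- aang \<phi> r e / 2) = cnj (Dh e) then 1 else -1"]) simp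
qed

definition tau :: "'d \<Rightarrow> real" where
  "tau e = (if Dh (J e) = \<i> * Dh e then 1 else -1)"

lemma Dh_J: "Dh (J e) = \<i> * of_real (tau e) * Dh e"
proof -
  obtain k :: int where "aang \<phi> r (J e) = aang \<phi> r e + pi + 2 * pi * k"
    using geo unfolding geometric_data_def by blast
  then have "(Dh (J e))\<^sup>2 = - (Dh e)\<^sup>2"
    using Dh_square cis_add_multiple_2pi[of "aang \<phi> r e + pi" k] by (simp flip: cis_mult)
  then have "(Dh (J e))\<^sup>2 = (\<i> * Dh e)\<^sup>2"
    by (simp add: power_mult_distrib)
  then show ?thesis
    unfolding tau_def by (subst square_eq_imp_sign_factor) auto
qed

lemma tau_cases: "tau e = 1 \<or> tau e = -1"
  by (simp add: tau_def)

lemma tau_square [simp]: "tau e * tau e = 1"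
  by (simp add: tau_def)

lemma tau_J [simp]: "tau (J e) = - tau e"
proof -
  have "Dh e = - (of_real (tau (J e) * tau e) * Dh e)"
    using Dh_J[of "J e"] unfolding Dh_J[of e] by (simp add: algebra_simps)
  then have "tau (J e) * tau e \<noteq> 1"
    using Dh_nonzero[of e] by (auto simp: complex_eq_iff)
  then show ?thesis
    by (auto simp: tau_def split: if_splits)
qed

definition rho :: "'d \<Rightarrow> real" where
  "rho e = (if Dh e * qq J R \<phi> r e = Dh (R e) then 1 else -1)"

lemma Dh_qq: "Dh e * qq J R \<phi> r e = of_real (rho e) * Dh (R e)"
proof -
  obtain m :: int where m: "ccw_angle \<phi> R e = \<phi> (R e) - \<phi> e + 2 * pi * of_int m"
    using ccw_angle_cong[of \<phi> R e] by blast
  have "(Dh e * qq J R \<phi> r e)\<^sup>2 = cis (aang \<phi> r e) * cis (ccw_angle \<phi> R e + r (R e) - r e)"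
    using Dh_square
    by (simp add: power_mult_distrib qq_eq_cis_ccw_angle cis_half_square)
  also have "\<dots> = cis (aang \<phi> r (R e) + 2 * pi * of_int m)"
    unfolding cis_mult aang_def m by (rule arg_cong[where f = cis]) simp
  also have "\<dots> = (Dh (R e))\<^sup>2"
    using Dh_square by (simp add: cis_add_multiple_2pi)
  finally have "(Dh e * qq J R \<phi> r e)\<^sup>2 = (Dh (R e))\<^sup>2" .
  then show ?thesis
    unfolding rho_def by (subst square_eq_imp_sign_factor) auto
qed

lemma rho_eq: "of_real (rho e) = Dh e * qq J R \<phi> r e / Dh (R e)"
  using Dh_qq[of e] by (simp add: field_simps)

text \<open>\<open>black_lift\<close> and \<open>white_lift\<close> are the maps \<open>(I - qR) D^(-1/2) \<psi>_B\<close> and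
  \<open>(I - ixJ) D^(-1/2) \<psi>_W\<close> of the paper, so \<open>KW_identity\<close> says \<open>KW \<circ> black_lift = white_lift \<circ> K\<close>.\<close>

definition black_lift :: "('d \<Rightarrow> real) \<Rightarrow> 'd \<Rightarrow> complex" where
  "black_lift g d = of_real (g d) / Dh d - qq J R \<phi> r d * (of_real (g (R d)) / Dh (R d))"

definition white_lift :: "('d \<Rightarrow> real) \<Rightarrow> 'd \<Rightarrow> complex" where
  "white_lift k e = of_real (k e) / Dh e - \<i> * of_real (xw \<theta> e) * (of_real (k (J e)) / Dh (J e))"

lemma KW_black_lift: "KW J R \<phi> r \<theta> (black_lift g) = white_lift (Kast J R \<theta> om1 om2 om3 g)"
  using KW_identity by (simp add: fun_eq_iff black_lift_def[abs_def] white_lift_def)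

lemma qq_div_Dh_R: "qq J R \<phi> r e * (of_real c / Dh (R e)) = of_real (rho e * c) / Dh e"
proof -
  have "qq J R \<phi> r e = of_real (rho e) * Dh (R e) / Dh e"
    using Dh_qq[of e] by (simp add: field_simps)
  then show ?thesis by simp
qed

lemma i_div_Dh_J: "\<i> * (of_real c / Dh (J e)) = of_real (tau e * c) / Dh e"
  unfolding Dh_J using tau_cases[of e] by (auto simp: field_simps)

lemma black_lift_real: "black_lift g e = of_real (g e - rho e * g (R e)) / Dh e"
  unfolding black_lift_def qq_div_Dh_R by (simp add: diff_divide_distrib)

lemma white_lift_real: "white_lift k e = of_real (k e - xw \<theta> e * tau e * k (J e)) / Dh e"
proof -
  have "\<i> * of_real (xw \<theta> e) * (of_real (k (J e)) / Dh (J e))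
      = of_real (xw \<theta> e) * (\<i> * (of_real (k (J e)) / Dh (J e)))"
    by (simp only: ac_simps)
  also have "\<dots> = of_real (xw \<theta> e) * (of_real (tau e * k (J e)) / Dh e)"
    unfolding i_div_Dh_J ..
  finally have "\<i> * of_real (xw \<theta> e) * (of_real (k (J e)) / Dh (J e))
      = of_real (xw \<theta> e) * (of_real (tau e * k (J e)) / Dh e)" .
  then show ?thesis
    unfolding white_lift_def by (simp add: diff_divide_distrib)
qed

lemma KW_black_lift_real:
  "KW J R \<phi> r \<theta> (black_lift g) e
     = of_real (g e - rho e * g (R e)
         + xw \<theta> e * tau e * (g (J e) + rho (J e) * g (R (J e)))) / Dh e"
proof -
  have J: "\<forall>d. J (J d) = d" by simp
  have "KW J R \<phi> r \<theta> (black_lift g) e = black_lift g e + \<i> * of_real (xw \<theta> e)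
      * (of_real (g (J e)) / Dh (J e) + qq J R \<phi> r (J e) * (of_real (g (R (J e))) / Dh (R (J e))))"
    using KW_twisted_difference[OF J bij_R ccw_angle_sum, where G = "\<lambda>d. of_real (g d) / Dh d"]
    unfolding black_lift_def[abs_def] by simp
  also have "\<i> * of_real (xw \<theta> e)
      * (of_real (g (J e)) / Dh (J e) + qq J R \<phi> r (J e) * (of_real (g (R (J e))) / Dh (R (J e))))
      = of_real (xw \<theta> e) * (\<i> * (of_real (g (J e) + rho (J e) * g (R (J e))) / Dh (J e)))"
    unfolding qq_div_Dh_R by (simp add: add_divide_distrib algebra_simps)
  also have "\<dots> = of_real (xw \<theta> e * tau e * (g (J e) + rho (J e) * g (R (J e)))) / Dh e"
    unfolding i_div_Dh_J by simp
  finally show ?thesis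
    unfolding black_lift_real by (simp add: add_divide_distrib)
qed

lemma Kast_eq:
  "Kast J R \<theta> om1 om2 om3 g e = cos (\<theta> e) * g e + tau e * sin (\<theta> e) * g (J e) - rho e * g (R e)"
proof -
  define K where "K = Kast J R \<theta> om1 om2 om3 g"
  define x where "x = xw \<theta> e"
  have balance: "K d - xw \<theta> d * tau d * K (J d)
      = g d - rho d * g (R d) + xw \<theta> d * tau d * (g (J d) + rho (J d) * g (R (J d)))" for d
    using KW_black_lift_real[of g d]
    unfolding KW_black_lift white_lift_real K_def of_real_div_Dh_eq_iff .
  have at_e: "K e - x * tau e * K (J e)
      = g e - rho e * g (R e) + x * tau e * (g (J e) + rho (J e) * g (R (J e)))"
    using balance[of e] unfolding x_def .
  have at_Je: "K (J e) + x * tau e * K e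
      = g (J e) - rho (J e) * g (R (J e)) - x * tau e * (g e + rho e * g (R e))"
    using balance[of "J e"] by (simp add: x_def xw_def algebra_simps)
  have "cos (\<theta> e / 2) \<noteq> 0"
    using theta_bounds[of e] pi_gt_zero
    by (intro cos_gt_zero_pi[THEN less_imp_neq, symmetric]) linarith+
  moreover have pos: "0 < 1 + x\<^sup>2"
    by (simp add: add_pos_nonneg)
  ultimately have cos: "cos (\<theta> e) * (1 + x\<^sup>2) = 1 - x\<^sup>2" and sin: "sin (\<theta> e) * (1 + x\<^sup>2) = 2 * x"
    using cos_tan_half[of "\<theta> e / 2"] sin_tan_half[of "\<theta> e / 2"]
    by (simp_all add: x_def xw_def)
  have "(1 + x\<^sup>2) * K e = (K e - x * tau e * K (J e)) + x * tau e * (K (J e) + x * tau e * K e)"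
    using tau_square[of e] by (simp add: algebra_simps power2_eq_square)
  also have "\<dots> = (1 - x\<^sup>2) * g e + 2 * x * tau e * g (J e) - (1 + x\<^sup>2) * rho e * g (R e)"
    unfolding at_e at_Je using tau_square[of e] by (simp add: algebra_simps power2_eq_square)
  also have "\<dots> = (1 + x\<^sup>2) * (cos (\<theta> e) * g e + tau e * sin (\<theta> e) * g (J e) - rho e * g (R e))"
    unfolding cos[symmetric] sin[symmetric] by (simp add: algebra_simps)
  finally show ?thesis
    using pos unfolding K_def by simp
qed

lemma white_lift_eq_0_iff: "white_lift k = (\<lambda>_. 0) \<longleftrightarrow> k = (\<lambda>_. 0)"
proof
  assume zero: "white_lift k = (\<lambda>_. 0)"
  have balance: "k d = xw \<theta> d * tau d * k (J d)" for d
    using fun_cong[OF zero, of d] by (simp add: white_lift_real flip: of_real_mult)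
  show "k = (\<lambda>_. 0)"
  proof
    fix e
    have "k e = - (xw \<theta> e)\<^sup>2 * k e"
      using balance[of e] balance[of "J e"] tau_cases[of e]
      by (auto simp: xw_def power2_eq_square algebra_simps)
    then have "(1 + (xw \<theta> e)\<^sup>2) * k e = 0"
      by (simp add: algebra_simps)
    moreover have "0 < 1 + (xw \<theta> e)\<^sup>2"
      by (simp add: add_pos_nonneg)
    ultimately show "k e = 0"
      by simp
  qed
qed (simp add: white_lift_def fun_eq_iff)

text \<open>Once around a vertex the phases \<open>q\<close> turn \<open>D^(1/2)\<close> by half of the total angle \<open>2 \<pi>\<close>,
  so the signs \<open>rho\<close> multiply to \<open>-1\<close> around every vertex.\<close>

lemma rho_holonomy:
  assumes h: "\<forall>e. h e = rho e * h (R e)"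
  shows "h b = 0"
proof -
  define n where "n = funpow_dist1 R b b"
  define y where "y k = (R ^^ k) b" for k
  define B where "B d = ccw_angle \<phi> R d + r (R d) - r d" for d
  note enum = orbit_enumeration[OF bij_R, of b, folded n_def y_def]
  have y_Suc: "y (Suc k) = R (y k)" for k
    unfolding y_def by simp
  have transport: "of_real (h b) = cis ((\<Sum>i<k. B (y i)) / 2) * (Dh b / Dh (y k)) * of_real (h (y k))"
    for k
  proof (induction k)
    case 0
    show ?case unfolding y_def by simp
  next
    case (Suc k)
    have "h (y k) = rho (y k) * h (y (Suc k))"
      using h unfolding y_Suc by blast
    then have "of_real (h (y k)) = Dh (y k) * qq J R \<phi> r (y k) / Dh (y (Suc k)) * of_real (h (y (Suc k)))"
      by (simp add: rho_eq y_Suc)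
    then have "of_real (h (y k)) = cis (B (y k) / 2) * (Dh (y k) / Dh (y (Suc k))) * of_real (h (y (Suc k)))"
      by (simp add: qq_eq_cis_ccw_angle B_def)
    with Suc.IH show ?case
      by (simp add: cis_mult add_divide_distrib)
  qed
  have "(\<Sum>i<n. B (y i)) = (\<Sum>i<n. ccw_angle \<phi> R (y i)) + (\<Sum>i<n. r (y (Suc i)) - r (y i))"
    unfolding B_def y_Suc by (simp add: sum.distrib[symmetric] algebra_simps)
  also have "(\<Sum>i<n. ccw_angle \<phi> R (y i)) = 2 * pi"
    using ccw_angle_sum[of b] unfolding n_def y_def by (simp only: sum_orb_enumeration[OF bij_R])
  also have "(\<Sum>i<n. r (y (Suc i)) - r (y i)) = 0"
    using sum_lessThan_telescope[of "\<lambda>i. r (y i)" n] enum(2) by (simp add: y_def)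
  finally have "of_real (h b) = - of_real (h b)"
    using transport[of n] enum(2) unfolding y_def by simp
  then show ?thesis by simp
qed

lemma LL_iff: "f \<in> LL \<phi> r \<longleftrightarrow> (\<forall>e. \<exists>t. f e = of_real t / Dh e)"
proof -
  have "(\<exists>t. f e = cis (- aang \<phi> r e / 2) * of_real t) \<longleftrightarrow> (\<exists>t. f e = of_real t / Dh e)" for e
  proof -
    obtain s where s: "s = 1 \<or> s = -1" "cis (- aang \<phi> r e / 2) = of_real s * cnj (Dh e)"
      using cis_half_aang by blast
    have "cis (- aang \<phi> r e / 2) * of_real t = of_real (s * t) / Dh e" for t
      unfolding s(2) cnj_Dh by simp
    moreover have "of_real t / Dh e = cis (- aang \<phi> r e / 2) * of_real (s * t)" for t
      unfolding s(2) cnj_Dh using s(1) by auto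
    ultimately show ?thesis by metis
  qed
  then show ?thesis
    unfolding LL_def by blast
qed

lemma inj_black_lift: "inj black_lift"
proof (rule injI)
  fix g g' assume eq: "black_lift g = black_lift g'"
  have "g e - g' e = rho e * (g (R e) - g' (R e))" for e
    using fun_cong[OF eq, of e] unfolding black_lift_real of_real_div_Dh_eq_iff
    by (simp add: algebra_simps)
  then have "g e - g' e = 0" for e
    using rho_holonomy[of "\<lambda>e. g e - g' e"] by blast
  then show "g = g'" by auto
qed

lemma range_black_lift: "range black_lift = LL \<phi> r"
proof
  show "range black_lift \<subseteq> LL \<phi> r"
  proof
    fix f assume "f \<in> range black_lift"
    then obtain g where "f = black_lift g" by blast
    then show "f \<in> LL \<phi> r"
      unfolding LL_iff black_lift_real by blast
  qed
  show "LL \<phi> r \<subseteq> range black_lift"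
  proof
    fix f assume "f \<in> LL \<phi> r"
    then obtain u where u: "f e = of_real (u e) / Dh e" for e
      unfolding LL_iff by metis
    obtain g where "\<forall>e. g e - rho e * g (R e) = u e"
      using twisted_shift_surj[of rho R u] rho_holonomy by metis
    then have "f = black_lift g"
      by (simp add: fun_eq_iff u black_lift_real)
    then show "f \<in> range black_lift" by blast
  qed
qed

section \<open>s-holomorphic functions\<close>

lemma Pr_aang:
  assumes "cmod u = 1"
  shows "Pr z (u * cis (- aang \<phi> r e / 2)) = of_real (Re (z * cnj u * Dh e)) * (u * cnj (Dh e))"
proof -
  obtain s where s: "s = 1 \<or> s = -1" "cis (- aang \<phi> r e / 2) = of_real s * cnj (Dh e)"
    using cis_half_aang by blast
  have sign: "u * cis (- aang \<phi> r e / 2) = of_real s * (u * cnj (Dh e))"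
    unfolding s(2) by (simp add: ac_simps)
  have "Pr z (u * cis (- aang \<phi> r e / 2)) = Pr z (u * cnj (Dh e))"
    unfolding sign by (rule Pr_sign[OF s(1)])
  also have "\<dots> = of_real (Re (z * cnj (u * cnj (Dh e)))) * (u * cnj (Dh e))"
    using assms by (intro Pr_unit) (simp add: norm_mult)
  finally show ?thesis
    by (simp add: mult.assoc)
qed

lemma Tt_eq: "Tt Dh \<theta> F e = - Im (Dh e * cis (- \<theta> e / 2) * F e)"
  unfolding Tt_def by (simp add: ac_simps)

lemma Tt_J:
  assumes "F \<in> CD J"
  shows "Tt Dh \<theta> F (J e) = - tau e * Re (Dh e * cis (- \<theta> e / 2) * F e)"
proof -
  have "F (J e) = F e"
    using assms by (simp add: CD_def)
  then show ?thesis
    unfolding Tt_def Dh_J by (simp add: algebra_simps)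
qed

definition Tt_inv :: "('d \<Rightarrow> real) \<Rightarrow> 'd \<Rightarrow> complex" where
  "Tt_inv k e = - cnj (Dh e * cis (- \<theta> e / 2)) * (of_real (tau e * k (J e)) + \<i> * of_real (k e))"

lemma Dh_cis_unit: "Dh e * cis (- \<theta> e / 2) * cnj (Dh e * cis (- \<theta> e / 2)) = 1"
proof -
  have "Dh e * cis (- \<theta> e / 2) * cnj (Dh e * cis (- \<theta> e / 2))
      = (Dh e * cnj (Dh e)) * (cis (- \<theta> e / 2) * cnj (cis (- \<theta> e / 2)))"
    by (simp only: complex_cnj_mult mult_ac)
  then show ?thesis
    by (simp add: cis_cnj cis_mult)
qed

lemma Tt_inv_CD: "Tt_inv k \<in> CD J"
  unfolding CD_def
proof (intro CollectI allI)
  fix e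
  show "Tt_inv k (J e) = Tt_inv k e"
    using tau_cases[of e] by (auto simp: Tt_inv_def Dh_J algebra_simps)
qed

lemma Tt_Tt_inv [simp]: "Tt Dh \<theta> (Tt_inv k) = k"
proof
  fix e
  define w where "w = Dh e * cis (- \<theta> e / 2)"
  have "w * Tt_inv k e = - (w * cnj w) * (of_real (tau e * k (J e)) + \<i> * of_real (k e))"
    unfolding Tt_inv_def w_def[symmetric] by (simp add: algebra_simps)
  then show "Tt Dh \<theta> (Tt_inv k) e = k e"
    using Dh_cis_unit[of e] unfolding Tt_eq w_def[symmetric] by simp
qed

lemma Tt_inv_Tt:
  assumes "F \<in> CD J"
  shows "Tt_inv (Tt Dh \<theta> F) = F"
proof
  fix e
  define w where "w = Dh e * cis (- \<theta> e / 2) * F e"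
  have "Tt Dh \<theta> F e = - Im w" "Tt Dh \<theta> F (J e) = - tau e * Re w"
    unfolding w_def by (rule Tt_eq, rule Tt_J[OF assms])
  then have "of_real (tau e * Tt Dh \<theta> F (J e)) + \<i> * of_real (Tt Dh \<theta> F e) = - w"
    using tau_square[of e] by (simp add: complex_eq_iff mult.assoc[symmetric])
  then show "Tt_inv (Tt Dh \<theta> F) e = F e"
    using Dh_cis_unit[of e] unfolding Tt_inv_def w_def by (simp add: ac_simps)
qed

lemma Re_rotated_eq_Tt:
  assumes "F \<in> CD J"
  shows "Re (\<i> * cis (\<theta> e / 2) * (Dh e * F e))
    = cos (\<theta> e) * Tt Dh \<theta> F e + tau e * sin (\<theta> e) * Tt Dh \<theta> F (J e)"
proof -
  define w where "w = Dh e * cis (- \<theta> e / 2) * F e"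
  have "\<i> * cis (\<theta> e / 2) * (Dh e * F e) = \<i> * cis (\<theta> e) * w"
    unfolding w_def by (simp add: mult_ac cis_mult)
  moreover have "Tt Dh \<theta> F e = - Im w" "Tt Dh \<theta> F (J e) = - tau e * Re w"
    unfolding w_def by (rule Tt_eq, rule Tt_J[OF assms])
  ultimately show ?thesis
    using tau_square[of e] by (simp add: algebra_simps)
qed

lemma Pr_shol_direction:
  "Pr (cis (pi / 4) * z) (cis (- (pi / 2 + aang \<phi> r e + t) / 2))
    = of_real (Re (\<i> * cis (t / 2) * (Dh e * z))) * (cis (- (pi / 4) - t / 2) * cnj (Dh e))"
proof -
  have "cis (- (pi / 2 + aang \<phi> r e + t) / 2) = cis (- (pi / 4) - t / 2) * cis (- aang \<phi> r e / 2)"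
    unfolding cis_mult by (rule arg_cong[where f = cis]) (simp add: field_simps)
  moreover have "cis (pi / 4) * cnj (cis (- (pi / 4) - t / 2)) = \<i> * cis (t / 2)"
    unfolding cis_cnj cis_mult by (simp add: add_divide_distrib flip: cis_mult)
  ultimately show ?thesis
    using Pr_aang[of "cis (- (pi / 4) - t / 2)" "cis (pi / 4) * z"] by (simp add: mult_ac)
qed

lemma shol_at_iff_Kast:
  assumes "F \<in> CD J"
  shows "shol_at J R \<phi> r \<theta> (\<lambda>d. cis (pi / 4) * F d) e
    \<longleftrightarrow> Kast J R \<theta> om1 om2 om3 (Tt Dh \<theta> F) e = 0"
proof -
  define u where "u = cis (- (pi / 4) - \<theta> e / 2) * cnj (Dh e)"
  have "u \<noteq> 0"
    unfolding u_def by simp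
  have right: "Pr (cis (pi / 4) * F (R e)) (cis (- (pi / 2 + aang \<phi> r (R e) - \<theta> (R e)) / 2))
      = of_real (Tt Dh \<theta> F (R e)) * (cis (- (pi / 4) + \<theta> (R e) / 2) * cnj (Dh (R e)))"
    using Pr_shol_direction[of "F (R e)" "R e" "- \<theta> (R e)"] by (simp add: Tt_def mult_ac)
  have turn: "cis (- (pi / 4) + \<theta> (R e) / 2) * (cnj (Dh (R e)) * cis ((beta J R \<phi> r e - \<theta> e - \<theta> (R e)) / 2))
      = of_real (rho e) * u"
  proof -
    have "cis (- (pi / 4) + \<theta> (R e) / 2) * cis ((beta J R \<phi> r e - \<theta> e - \<theta> (R e)) / 2)
        = cis (- (pi / 4) - \<theta> e / 2) * qq J R \<phi> r e"
      unfolding qq_def cis_mult by (rule arg_cong[where f = cis]) (simp add: field_simps)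
    then show ?thesis
      unfolding u_def cnj_Dh by (simp add: rho_eq mult_ac)
  qed
  have "shol_at J R \<phi> r \<theta> (\<lambda>d. cis (pi / 4) * F d) e
      \<longleftrightarrow> of_real (Re (\<i> * cis (\<theta> e / 2) * (Dh e * F e))) * u
          = of_real (Tt Dh \<theta> F (R e)) * (of_real (rho e) * u)"
    unfolding shol_at_def Pr_shol_direction right mult.assoc turn u_def[symmetric] ..
  also have "\<dots> \<longleftrightarrow> of_real (Re (\<i> * cis (\<theta> e / 2) * (Dh e * F e))) * u
      = of_real (rho e * Tt Dh \<theta> F (R e)) * u"
    by (simp only: of_real_mult mult_ac)
  also have "\<dots> \<longleftrightarrow> Re (\<i> * cis (\<theta> e / 2) * (Dh e * F e)) = rho e * Tt Dh \<theta> F (R e)"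
    using \<open>u \<noteq> 0\<close> by (simp only: mult_cancel_right of_real_eq_iff simp_thms)
  also have "\<dots> \<longleftrightarrow> Kast J R \<theta> om1 om2 om3 (Tt Dh \<theta> F) e = 0"
    unfolding Re_rotated_eq_Tt[OF assms] Kast_eq by linarith
  finally show ?thesis .
qed

lemma sO_eq: "sO J R \<phi> r \<theta> = {F \<in> CD J. Kast J R \<theta> om1 om2 om3 (Tt Dh \<theta> F) = (\<lambda>_. 0)}"
  unfolding sO_def using shol_at_iff_Kast by (auto simp: fun_eq_iff)

lemma SS_eq_black_lift:
  assumes "F \<in> sO J R \<phi> r \<theta>"
  shows "SS \<phi> r \<theta> F = black_lift (\<lambda>d. Tt Dh \<theta> F d / 2)"
proof
  fix e
  have F: "F \<in> CD J" "shol_at J R \<phi> r \<theta> (\<lambda>d. cis (pi / 4) * F d) e"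
    using assms by (auto simp: sO_def)
  define A where "A = Re (\<i> * cis (\<theta> e / 2) * (Dh e * F e))"
  define B where "B = Re (Dh e * F e)"
  have "A = rho e * Tt Dh \<theta> F (R e)"
    using F Re_rotated_eq_Tt[of F e] shol_at_iff_Kast[of F e] unfolding A_def by (simp add: Kast_eq)
  moreover have "Tt Dh \<theta> F e - A = 2 * sin (\<theta> e / 2) * B"
    unfolding Tt_def A_def B_def by (simp add: algebra_simps)
  ultimately have "sin (\<theta> e / 2) * B = Tt Dh \<theta> F e / 2 - rho e * (Tt Dh \<theta> F (R e) / 2)"
    by linarith
  moreover have "SS \<phi> r \<theta> F e = of_real (sin (\<theta> e / 2) * B) / Dh e"
    using Pr_aang[of 1 "F e" e] unfolding B_def by (simp add: SS_def cnj_Dh mult_ac)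
  ultimately show "SS \<phi> r \<theta> F e = black_lift (\<lambda>d. Tt Dh \<theta> F d / 2) e"
    unfolding black_lift_real by simp
qed

lemma Tp_eq: "Tp Dh \<phi> r \<theta> F e = cis (\<theta> e / 2) * of_real (Tt Dh \<theta> F e)"
proof -
  have "\<i> * cis (- (aang \<phi> r e - \<theta> e) / 2) = \<i> * cis (\<theta> e / 2) * cis (- aang \<phi> r e / 2)"
    unfolding mult.assoc cis_mult by (simp add: field_simps)
  moreover have "cmod (\<i> * cis (\<theta> e / 2)) = 1"
    by (simp add: norm_mult)
  ultimately have "Tp Dh \<phi> r \<theta> F e
      = \<i> * Dh e * (of_real (Re (F e * cnj (\<i> * cis (\<theta> e / 2)) * Dh e)) * (\<i> * cis (\<theta> e / 2) * cnj (Dh e)))"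
    unfolding Tp_def by (simp only: Pr_aang)
  also have "Re (F e * cnj (\<i> * cis (\<theta> e / 2)) * Dh e) = - Tt Dh \<theta> F e"
    unfolding Tt_def by (simp add: cis_cnj algebra_simps)
  finally show ?thesis
    using Dh_mult_cnj[of e] by (simp add: mult_ac)
qed

lemma dbar_cis_half:
  shows "dbar J R \<theta> om1 om2 om3 (\<lambda>d. cis (\<theta> d / 2) * of_real (k d)) e
    = inverse (of_real (sin (2 * \<theta> e))) * (cis (\<theta> e / 2) * of_real (Kast J R \<theta> om1 om2 om3 k e))"
proof -
  have "cis (\<theta> e) * cis (- (\<theta> e + \<theta> (R e)) / 2) * cis (\<theta> (R e) / 2) = cis (\<theta> e / 2)"
    unfolding cis_mult by (rule arg_cong[where f = cis]) (simp add: field_simps)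
  then show ?thesis
    by (simp add: dbar_def Kast_def algebra_simps)
qed

lemma bij_betw_Tt_sO: "bij_betw (Tt Dh \<theta>) (sO J R \<phi> r \<theta>) {g. Kast J R \<theta> om1 om2 om3 g = (\<lambda>_. 0)}"
  by (rule bij_betw_byWitness[where f' = Tt_inv]) (auto simp: sO_eq Tt_inv_Tt Tt_inv_CD)

lemma bij_betw_black_lift:
  "bij_betw black_lift {g. Kast J R \<theta> om1 om2 om3 g = (\<lambda>_. 0)} (LL \<phi> r \<inter> {f. KW J R \<phi> r \<theta> f = (\<lambda>_. 0)})"
  unfolding bij_betw_def
proof
  show "inj_on black_lift {g. Kast J R \<theta> om1 om2 om3 g = (\<lambda>_. 0)}"
    using inj_black_lift by (rule inj_on_subset) simp
  show "black_lift ` {g. Kast J R \<theta> om1 om2 om3 g = (\<lambda>_. 0)} = LL \<phi> r \<inter> {f. KW J R \<phi> r \<theta> f = (\<lambda>_. 0)}"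
    unfolding range_black_lift[symmetric] by (auto simp: KW_black_lift white_lift_eq_0_iff)
qed

lemma bij_betw_SS_sO: "bij_betw (SS \<phi> r \<theta>) (sO J R \<phi> r \<theta>) (LL \<phi> r \<inter> {f. KW J R \<phi> r \<theta> f = (\<lambda>_. 0)})"
proof -
  let ?K = "{g. Kast J R \<theta> om1 om2 om3 g = (\<lambda>_. 0)}"
  have half: "Kast J R \<theta> om1 om2 om3 (\<lambda>d. g d / 2) e = Kast J R \<theta> om1 om2 om3 g e / 2"
    and double: "Kast J R \<theta> om1 om2 om3 (\<lambda>d. 2 * g d) e = 2 * Kast J R \<theta> om1 om2 om3 g e" for g e
    by (simp_all add: Kast_def field_simps)
  have "bij_betw (\<lambda>g e. g e / 2) ?K ?K"
    by (rule bij_betw_byWitness[where f' = "\<lambda>g e. 2 * g e"]) (auto simp: fun_eq_iff half double)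
  with bij_betw_Tt_sO bij_betw_black_lift
  have "bij_betw (black_lift \<circ> (\<lambda>g e. g e / 2) \<circ> Tt Dh \<theta>) (sO J R \<phi> r \<theta>)
      (LL \<phi> r \<inter> {f. KW J R \<phi> r \<theta> f = (\<lambda>_. 0)})"
    by (intro bij_betw_trans)
  then show ?thesis
    by (rule bij_betw_cong[THEN iffD1, rotated]) (simp add: SS_eq_black_lift)
qed

lemma bij_betw_Tp_sO:
  assumes "isoradial J R \<phi> \<theta>"
  shows "bij_betw (Tp Dh \<phi> r \<theta>) (sO J R \<phi> r \<theta>)
    ({g. dbar J R \<theta> om1 om2 om3 g = (\<lambda>_. 0)} \<inter> Tp Dh \<phi> r \<theta> ` CD J)"
proof -
  let ?K = "{g. Kast J R \<theta> om1 om2 om3 g = (\<lambda>_. 0)}"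
  define E where "E k = (\<lambda>e. cis (\<theta> e / 2) * of_real (k e))" for k :: "'d \<Rightarrow> real"
  have Tp: "Tp Dh \<phi> r \<theta> = E \<circ> Tt Dh \<theta>"
    by (simp add: fun_eq_iff E_def Tp_eq)
  have "inj E"
    by (rule injI) (simp add: E_def fun_eq_iff)
  have "sin (2 * \<theta> e) \<noteq> 0" for e
  proof -
    have "0 < \<theta> e" "\<theta> e < pi / 2"
      using assms by (auto simp: isoradial_def)
    then show ?thesis
      by (intro sin_gt_zero[THEN less_imp_neq, symmetric]) linarith+
  qed
  then have dbar_E: "dbar J R \<theta> om1 om2 om3 (E k) = (\<lambda>_. 0) \<longleftrightarrow> k \<in> ?K" for k
    by (simp add: E_def dbar_cis_half fun_eq_iff)
  have "Tt Dh \<theta> ` CD J = UNIV"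
    using Tt_inv_CD by (metis Tt_Tt_inv surjI image_eqI UNIV_eq_I)
  then have "{g. dbar J R \<theta> om1 om2 om3 g = (\<lambda>_. 0)} \<inter> Tp Dh \<phi> r \<theta> ` CD J = E ` ?K"
    unfolding Tp image_comp[symmetric] using dbar_E by auto
  moreover have "bij_betw (E \<circ> Tt Dh \<theta>) (sO J R \<phi> r \<theta>) (E ` ?K)"
    using bij_betw_Tt_sO inj_on_imp_bij_betw[OF inj_on_subset[OF \<open>inj E\<close>]]
    by (blast intro: bij_betw_trans)
  ultimately show ?thesis
    unfolding Tp by simp
qed

end

theorem corollary4p4:
  fixes J R :: "'d::finite \<Rightarrow> 'd"
    and \<phi> r \<theta> om1 om2 om3 :: "'d \<Rightarrow> real"
    and Dh :: "'d \<Rightarrow> complex"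
  assumes map: "combinatorial_map J R"
    and geo: "geometric_data J R \<phi> r \<theta>"
    and kast: "kasteleyn J R om1 om2 om3"
    and sqrtD: "\<forall>e. (Dh e)\<^sup>2 = cis (aang \<phi> r e)"
    and ident: "\<forall>g e.
        KW J R \<phi> r \<theta>
          (\<lambda>d. of_real (g d) / Dh d - qq J R \<phi> r d * (of_real (g (R d)) / Dh (R d))) e
        = of_real (Kast J R \<theta> om1 om2 om3 g e) / Dh e
          - \<i> * of_real (xw \<theta> e) * (of_real (Kast J R \<theta> om1 om2 om3 g (J e)) / Dh (J e))"
  shows "bij_betw (SS \<phi> r \<theta>) (sO J R \<phi> r \<theta>) (LL \<phi> r \<inter> {f. KW J R \<phi> r \<theta> f = (\<lambda>_. 0)})
       \<and> bij_betw (Tt Dh \<theta>) (sO J R \<phi> r \<theta>) {g. Kast J R \<theta> om1 om2 om3 g = (\<lambda>_. 0)}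
       \<and> (isoradial J R \<phi> \<theta> \<longrightarrow>
            bij_betw (Tp Dh \<phi> r \<theta>) (sO J R \<phi> r \<theta>)
              ({g. dbar J R \<theta> om1 om2 om3 g = (\<lambda>_. 0)} \<inter> Tp Dh \<phi> r \<theta> ` CD J))"
proof -
  interpret kac_ward_kasteleyn J R \<phi> r \<theta> om1 om2 om3 Dh
    using map geo sqrtD ident by unfold_locales
  show ?thesis
    using bij_betw_SS_sO bij_betw_Tt_sO bij_betw_Tp_sO by blast
qed

end
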